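(* Let $\Gamma$ be an oriented Jordan smooth curve and $\alpha:\Gamma\to\Gamma$ a homeomorphism with nonempty set $\Lambda$ of periodic points. Then the set $Y\setminus Y'$ of isolated points of $Y$ is contained in the set of endpoints of the connected components of $\Phi\setminus\Lambda\,(=\Gamma\setminus\Lambda)$.
   Context: $\alpha_n$ denote iterates of $\alpha$. If $\alpha$ preserves the orientation, all periodic points have a common multiplicity $m$ (period); if $\alpha$ changes the orientation, set $m=2$; $\Lambda$ is the set of fixed points of $\alpha_m$. $\Phi=\overline{\{t:\alpha_m(t)\ne t\}}$, $Y=\Lambda\cap\Phi$, $Y'$ the set of limit points of $Y$. *)

theory Defs
  imports "HOL-Analysis.Analysis"
begin

definition smooth_jordan_curve :: "complex set \<Rightarrow> bool" where
  "smooth_jordan_curve \<Gamma> \<longleftrightarrow>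
     (\<exists>\<gamma>. simple_path \<gamma> \<and> path_image \<gamma> = \<Gamma> \<and>
          \<gamma> C1_differentiable_on {0..1} \<and>
          (\<forall>t\<in>{0..1}. vector_derivative \<gamma> (at t within {0..1}) \<noteq> 0) \<and>
          (pathstart \<gamma> = pathfinish \<gamma> \<longrightarrow>
             vector_derivative \<gamma> (at 0 within {0..1}) = vector_derivative \<gamma> (at 1 within {0..1})))"

definition periodic_points :: "complex set \<Rightarrow> (complex \<Rightarrow> complex) \<Rightarrow> complex set" where
  "periodic_points \<Gamma> \<alpha> = {t \<in> \<Gamma>. \<exists>n>0. (\<alpha> ^^ n) t = t}"

definition mult_m :: "complex set \<Rightarrow> (complex \<Rightarrow> complex) \<Rightarrow> nat" where
  "mult_m \<Gamma> \<alpha> = (LEAST m. m > 0 \<and> (\<forall>t \<in> periodic_points \<Gamma> \<alpha>. (\<alpha> ^^ m) t = t))"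

definition Lambda_set :: "complex set \<Rightarrow> (complex \<Rightarrow> complex) \<Rightarrow> complex set" where
  "Lambda_set \<Gamma> \<alpha> = {t \<in> \<Gamma>. (\<alpha> ^^ mult_m \<Gamma> \<alpha>) t = t}"

definition Phi_set :: "complex set \<Rightarrow> (complex \<Rightarrow> complex) \<Rightarrow> complex set" where
  "Phi_set \<Gamma> \<alpha> = closure {t \<in> \<Gamma>. (\<alpha> ^^ mult_m \<Gamma> \<alpha>) t \<noteq> t}"

definition Y_set :: "complex set \<Rightarrow> (complex \<Rightarrow> complex) \<Rightarrow> complex set" where
  "Y_set \<Gamma> \<alpha> = Lambda_set \<Gamma> \<alpha> \<inter> Phi_set \<Gamma> \<alpha>"

end

theory Submission
  imports Defs
begin

text \<open>Parametrise \<open>\<Gamma>\<close> by a simple path \<open>\<gamma>\<close> and write \<open>x = \<gamma> u\<close> for an isolated point of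
\<open>Y = \<Lambda> \<inter> closure (\<Gamma> - \<Lambda>)\<close>, where by compactness \<open>u\<close> can be taken in the closure of
\<open>\<gamma>\<^sup>-\<^sup>1(\<Gamma> - \<Lambda>)\<close> (for a closed loop, this chooses the end of \<open>[0,1]\<close> approached from \<open>\<Gamma> - \<Lambda>\<close>). Pick \<open>v\<close> close to \<open>u\<close>
with \<open>\<gamma> v \<notin> \<Lambda>\<close>. By injectivity of \<open>\<gamma>\<close> and isolation of \<open>x\<close>, the image \<open>S\<close> of the half-open
interval from \<open>v\<close> to \<open>u\<close> misses \<open>Y\<close>, so \<open>S \<inter> \<Lambda> = S - closure (\<Gamma> - \<Lambda>)\<close> is clopen in the
connected set \<open>S\<close>, hence empty. Thus \<open>S\<close> lies in a component \<open>C\<close> of \<open>\<Gamma> - \<Lambda>\<close>, and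
\<open>x \<in> closure S \<subseteq> closure C\<close> while \<open>x \<in> \<Lambda>\<close> gives \<open>x \<notin> C\<close>.\<close>

lemma continuous_on_funpow:
  assumes "continuous_on S f" "f ` S \<subseteq> S"
  shows "continuous_on S (f ^^ n)"
proof (induction n)
  case (Suc n)
  then have "continuous_on S (f ^^ n \<circ> f)"
    using assms continuous_on_compose continuous_on_subset by blast
  then show ?case by (simp only: funpow_Suc_right)
qed (simp add: continuous_on_id)

lemma closed_fixpoints:
  fixes f :: "'a::real_normed_vector \<Rightarrow> 'a"
  assumes "continuous_on S f" "closed S"
  shows "closed {x \<in> S. f x = x}"
proof -
  have "closed {x \<in> S. f x - x = 0}"
    using assms by (intro continuous_closed_preimage_constant continuous_intros)
  then show ?thesis by simp
qed

lemma closure_image_subset_image_closure: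
  fixes f :: "'a::metric_space \<Rightarrow> 'b::t2_space"
  assumes "continuous_on K f" "compact K" "A \<subseteq> K"
  shows "closure (f ` A) \<subseteq> f ` closure A"
proof -
  have "closure A \<subseteq> K"
    using assms compact_imp_closed closure_minimal by blast
  then have "compact (f ` closure A)"
    using assms compact_continuous_image continuous_on_subset
    by (metis closed_closure compact_Int_closed inf.absorb_iff2)
  then show ?thesis
    by (meson closure_minimal closure_subset compact_imp_closed image_mono)
qed

lemma path_closure_diff_preimage:
  fixes \<gamma> :: "real \<Rightarrow> 'a::metric_space"
  assumes "path \<gamma>" "x \<in> closure (path_image \<gamma> - L)"
  obtains u where "u \<in> closure {s \<in> {0..1}. \<gamma> s \<notin> L}" "\<gamma> u = x" "u \<in> {0..1}"
proof -
  define A where "A = {s \<in> {0..1}. \<gamma> s \<notin> L}"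
  have "path_image \<gamma> - L = \<gamma> ` A"
    unfolding path_image_def A_def by auto
  then have "x \<in> closure (\<gamma> ` A)"
    using assms(2) by simp
  also have "\<dots> \<subseteq> \<gamma> ` closure A"
    using assms(1) unfolding path_def
    by (rule closure_image_subset_image_closure) (auto simp: A_def)
  finally obtain u where "u \<in> closure A" "\<gamma> u = x"
    by blast
  moreover have "closure A \<subseteq> {0..1}"
    by (rule closure_minimal) (auto simp: A_def)
  ultimately show ?thesis
    using that unfolding A_def by blast
qed

lemma simple_path_neq_nearby:
  assumes "simple_path \<gamma>" "s \<in> {0..1}" "t \<in> {0..1}" "s \<noteq> t" "dist s t < 1"
  shows "\<gamma> s \<noteq> \<gamma> t"
proof
  assume "\<gamma> s = \<gamma> t"
  with assms have "s = 0 \<and> t = 1 \<or> s = 1 \<and> t = 0"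
    unfolding simple_path_def loop_free_def by blast
  with assms(5) show False by (auto simp: dist_real_def)
qed

lemma simple_path_isolated_preimage:
  fixes \<gamma> :: "real \<Rightarrow> 'a::metric_space"
  assumes "simple_path \<gamma>" "u \<in> {0..1}" "\<not> \<gamma> u islimpt Y"
  obtains \<delta> where "\<delta> > 0" "\<And>t. t \<in> {0..1} \<Longrightarrow> dist t u < \<delta> \<Longrightarrow> t \<noteq> u \<Longrightarrow> \<gamma> t \<notin> Y"
proof -
  obtain e where "e > 0" and e: "\<And>y. y \<in> Y \<Longrightarrow> y \<noteq> \<gamma> u \<Longrightarrow> e \<le> dist y (\<gamma> u)"
    using assms(3) unfolding islimpt_approachable by (meson not_less)
  have "continuous_on {0..1} \<gamma>"
    using assms(1) unfolding simple_path_def path_def by blast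
  then obtain d where "d > 0"
    and d: "\<And>t. t \<in> {0..1} \<Longrightarrow> dist t u < d \<Longrightarrow> dist (\<gamma> t) (\<gamma> u) < e"
    using assms(2) \<open>e > 0\<close> unfolding continuous_on_iff by blast
  show ?thesis
  proof
    show "min d 1 > 0"
      using \<open>d > 0\<close> by simp
  next
    fix t
    assume t: "t \<in> {0..1}" "dist t u < min d 1" "t \<noteq> u"
    show "\<gamma> t \<notin> Y"
    proof
      assume "\<gamma> t \<in> Y"
      moreover have "\<gamma> t \<noteq> \<gamma> u"
        using simple_path_neq_nearby[OF assms(1) t(1) assms(2) t(3)] t(2) by simp
      ultimately have "e \<le> dist (\<gamma> t) (\<gamma> u)"
        by (rule e)
      moreover have "dist (\<gamma> t) (\<gamma> u) < e"
        using d t by simp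
      ultimately show False
        by simp
    qed
  qed
qed

lemma real_half_open_segment:
  fixes u v :: real
  assumes "u \<noteq> v"
  obtains I where "connected I" "v \<in> I" "u \<in> closure I" "I \<subseteq> closed_segment u v - {u}"
proof (cases "u < v")
  case True
  then show ?thesis
    by (intro that[of "{u<..v}"]) (auto simp: closed_segment_eq_real_ivl)
next
  case False
  with assms have "v < u" by simp
  then show ?thesis
    by (intro that[of "{v..<u}"]) (auto simp: closed_segment_eq_real_ivl)
qed

lemma connected_subset_component_diff:
  assumes "closed L" "connected S" "S \<subseteq> \<Gamma>" "S \<inter> L \<inter> closure (\<Gamma> - L) = {}"
    and "y \<in> S" "y \<notin> L"
  shows "S \<subseteq> connected_component_set (\<Gamma> - L) y"
proof -
  have "closedin (top_of_set S) (S \<inter> L)"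
    using assms(1) closedin_closed_Int by blast
  moreover have "S \<inter> L = S \<inter> - closure (\<Gamma> - L)"
    using assms(3,4) closure_subset by blast
  then have "openin (top_of_set S) (S \<inter> L)"
    by (metis open_Compl closed_closure openin_open_Int)
  ultimately have "S \<inter> L = {}"
    using assms(2,5,6) connected_clopen by blast
  then show ?thesis
    using assms by (intro connected_component_maximal) auto
qed

lemma simple_path_isolated_frontier_point:
  fixes \<gamma> :: "real \<Rightarrow> 'a::metric_space"
  defines "\<Gamma> \<equiv> path_image \<gamma>"
  assumes "simple_path \<gamma>" "closed L"
    and x: "x \<in> L \<inter> closure (\<Gamma> - L)" "\<not> x islimpt (L \<inter> closure (\<Gamma> - L))"
  shows "\<exists>C\<in>components (\<Gamma> - L). x \<in> closure C - C"
proof -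
  define Y where "Y = L \<inter> closure (\<Gamma> - L)"
  define A where "A = {s \<in> {0..1}. \<gamma> s \<notin> L}"
  have cont: "continuous_on {0..1} \<gamma>"
    using assms(2) unfolding simple_path_def path_def by blast
  obtain u where u: "u \<in> closure A" "\<gamma> u = x" and u01: "u \<in> {0..1}"
    using path_closure_diff_preimage[OF simple_path_imp_path[OF assms(2)]] x(1)
    unfolding \<Gamma>_def A_def by blast
  obtain \<delta> where "\<delta> > 0"
    and avoid: "\<And>t. t \<in> {0..1} \<Longrightarrow> dist t u < \<delta> \<Longrightarrow> t \<noteq> u \<Longrightarrow> \<gamma> t \<notin> Y"
    using simple_path_isolated_preimage[OF assms(2) u01] x(2) u(2) unfolding Y_def by blast
  then obtain v where v: "v \<in> A" "dist v u < \<delta>"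
    using u(1) closure_approachable by blast
  have "\<gamma> v \<notin> L" "v \<in> {0..1}"
    using v(1) A_def by auto
  then have "u \<noteq> v"
    using u(2) x(1) by auto
  then obtain I where I: "connected I" "v \<in> I" "u \<in> closure I" "I \<subseteq> closed_segment u v - {u}"
    by (rule real_half_open_segment)
  define C where "C = connected_component_set (\<Gamma> - L) (\<gamma> v)"
  have I01: "I \<subseteq> {0..1}"
    using I(4) closed_segment_subset[OF u01 \<open>v \<in> {0..1}\<close>] by auto
  have "\<gamma> t \<notin> Y" if "t \<in> I" for t
  proof (rule avoid)
    show "dist t u < \<delta>"
      using dist_in_closed_segment[of t u v] I(4) that v(2) by (auto simp: dist_commute)
  qed (use I01 I(4) that in auto)
  then have "\<gamma> ` I \<inter> L \<inter> closure (\<Gamma> - L) = {}"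
    unfolding Y_def by blast
  moreover have "\<gamma> ` I \<subseteq> \<Gamma>"
    using I01 unfolding \<Gamma>_def path_image_def by blast
  moreover have "connected (\<gamma> ` I)"
    using I(1) I01 cont connected_continuous_image continuous_on_subset by blast
  ultimately have S: "\<gamma> ` I \<subseteq> C"
    unfolding C_def using I(2) \<open>\<gamma> v \<notin> L\<close>
    by (intro connected_subset_component_diff[OF assms(3)]) auto
  have "closure I \<subseteq> {0..1}"
    using I01 closure_minimal by blast
  then have "\<gamma> ` closure I \<subseteq> closure (\<gamma> ` I)"
    by (rule image_closure_subset[OF continuous_on_subset[OF cont] closed_closure closure_subset])
  then have "x \<in> closure C"
    using I(3) u(2) S closure_mono by blast
  moreover have "x \<notin> C"
    using x(1) connected_component_subset unfolding C_def by blast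
  moreover have "\<gamma> v \<in> \<Gamma> - L"
    using \<open>\<gamma> v \<notin> L\<close> \<open>v \<in> {0..1}\<close> unfolding \<Gamma>_def path_image_def by blast
  then have "C \<in> components (\<Gamma> - L)"
    unfolding C_def by (rule componentsI)
  ultimately show ?thesis by blast
qed

theorem proposition2p6:
  fixes \<Gamma> :: "complex set" and \<alpha> :: "complex \<Rightarrow> complex"
  assumes "smooth_jordan_curve \<Gamma>"
    and "\<exists>\<beta>. homeomorphism \<Gamma> \<Gamma> \<alpha> \<beta>"
    and "periodic_points \<Gamma> \<alpha> \<noteq> {}"
  shows "Y_set \<Gamma> \<alpha> - {x. x islimpt Y_set \<Gamma> \<alpha>}
           \<subseteq> \<Union>{closure C - C | C. C \<in> components (\<Gamma> - Lambda_set \<Gamma> \<alpha>)}"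
proof -
  obtain \<gamma> where \<gamma>: "simple_path \<gamma>" "path_image \<gamma> = \<Gamma>"
    using assms(1) unfolding smooth_jordan_curve_def by blast
  have "continuous_on \<Gamma> \<alpha>" "\<alpha> ` \<Gamma> \<subseteq> \<Gamma>"
    using assms(2) unfolding homeomorphism_def by auto
  then have "continuous_on \<Gamma> (\<alpha> ^^ mult_m \<Gamma> \<alpha>)"
    by (rule continuous_on_funpow)
  moreover have "closed \<Gamma>"
    using \<gamma> compact_simple_path_image compact_imp_closed by blast
  ultimately have closed_Lambda: "closed (Lambda_set \<Gamma> \<alpha>)"
    unfolding Lambda_set_def by (rule closed_fixpoints)
  have "Phi_set \<Gamma> \<alpha> = closure (\<Gamma> - Lambda_set \<Gamma> \<alpha>)"
    unfolding Phi_set_def Lambda_set_def by (rule arg_cong[where f = closure]) auto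
  then have Y: "Y_set \<Gamma> \<alpha> = Lambda_set \<Gamma> \<alpha> \<inter> closure (\<Gamma> - Lambda_set \<Gamma> \<alpha>)"
    by (simp add: Y_set_def)
  show ?thesis
  proof
    fix x
    assume "x \<in> Y_set \<Gamma> \<alpha> - {x. x islimpt Y_set \<Gamma> \<alpha>}"
    then obtain C where "C \<in> components (\<Gamma> - Lambda_set \<Gamma> \<alpha>)" "x \<in> closure C - C"
      using simple_path_isolated_frontier_point[OF \<gamma>(1) closed_Lambda] unfolding \<gamma>(2) Y by auto
    then show "x \<in> \<Union>{closure C - C | C. C \<in> components (\<Gamma> - Lambda_set \<Gamma> \<alpha>)}"
      by blast
  qed
qed

end
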